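(* Let $G$ be a finite abelian group with basis $(e_1,\dots,e_s)$ and dual basis $(\chi_1,\dots,\chi_s)$ of $G^*$. Let $I=\{1,\dots,k\}\subseteq I_G$ be a subset with $k$ elements $i=(H_i,\psi_i)$ such that the natural map $H_1\oplus\dots\oplus H_k\to G$ is surjective. Then the $k\times s$ matrix $(r^i_j)_{1\le i\le k,\,1\le j\le s}$ has rank $s$ over $\mathbb{Q}$.
   Context: A basis of $G$ is a sequence $(e_1,\dots,e_s)$ of elements such that $G$ is the direct sum of the cyclic subgroups $\langle e_j\rangle$ and $\mathrm{ord}(e_j)$ divides $\mathrm{ord}(e_{j+1})$ for $j<s$. The dual basis is $(\chi_1,\dots,\chi_s)$ with $\chi_j(e_i)=1$ for $i\ne j$ and $\chi_i(e_i)=e^{2\pi\sqrt{-1}/\mathrm{ord}(e_i)}$. $I_G$ is the set of pairs $(H,\psi)$ with $H\le G$ cyclic of order $\ge2$ and $\psi$ a generator of $H^*=\mathrm{Hom}(H,\mathbb{C}^* )$. For $i=(H_i,\psi_i)$, $m_i=\#H_i$, and $r^i_j$ is the unique integer with $0\le r^i_j<m_i$ and $\chi_j|_{H_i}=\psi_i^{r^i_j}$. *)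

theory Defs
  imports "HOL-Algebra.Algebra" "Jordan_Normal_Form.DL_Rank"
begin

definition is_basis :: "('a, 'b) monoid_scheme \<Rightarrow> nat \<Rightarrow> (nat \<Rightarrow> 'a) \<Rightarrow> bool" where
  "is_basis G s e \<longleftrightarrow>
     (\<forall>j<s. e j \<in> carrier G \<and> e j \<noteq> \<one>\<^bsub>G\<^esub>) \<and>
     (\<forall>j. Suc j < s \<longrightarrow> group.ord G (e j) dvd group.ord G (e (Suc j))) \<and>
     bij_betw (\<lambda>x. finprod G x {..<s}) (PiE {..<s} (\<lambda>j. generate G {e j})) (carrier G)"

definition char_on :: "('a, 'b) monoid_scheme \<Rightarrow> 'a set \<Rightarrow> ('a \<Rightarrow> complex) \<Rightarrow> bool" where
  "char_on G H \<psi> \<longleftrightarrow> (\<forall>x\<in>H. \<psi> x \<noteq> 0) \<and> (\<forall>x\<in>H. \<forall>y\<in>H. \<psi> (x \<otimes>\<^bsub>G\<^esub> y) = \<psi> x * \<psi> y)"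

definition is_dual_basis :: "('a, 'b) monoid_scheme \<Rightarrow> nat \<Rightarrow> (nat \<Rightarrow> 'a) \<Rightarrow> (nat \<Rightarrow> 'a \<Rightarrow> complex) \<Rightarrow> bool" where
  "is_dual_basis G s e \<chi> \<longleftrightarrow>
     (\<forall>j<s. char_on G (carrier G) (\<chi> j)) \<and>
     (\<forall>i<s. \<forall>j<s. \<chi> j (e i) =
        (if i = j then exp (2 * pi * \<i> / of_nat (group.ord G (e i))) else 1))"

definition generates_dual :: "('a, 'b) monoid_scheme \<Rightarrow> 'a set \<Rightarrow> ('a \<Rightarrow> complex) \<Rightarrow> bool" where
  "generates_dual G H \<psi> \<longleftrightarrow> char_on G H \<psi> \<and>
     (\<forall>\<phi>. char_on G H \<phi> \<longrightarrow> (\<exists>n::nat. \<forall>x\<in>H. \<phi> x = \<psi> x ^ n))"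

definition in_IG :: "('a, 'b) monoid_scheme \<Rightarrow> 'a set \<Rightarrow> ('a \<Rightarrow> complex) \<Rightarrow> bool" where
  "in_IG G H \<psi> \<longleftrightarrow> subgroup H G \<and> cyclic_group (subgroup_generated G H) \<and> card H \<ge> 2
     \<and> generates_dual G H \<psi>"

definition r_coef :: "'a set \<Rightarrow> ('a \<Rightarrow> complex) \<Rightarrow> ('a \<Rightarrow> complex) \<Rightarrow> nat" where
  "r_coef H \<psi> \<chi> = (THE r. r < card H \<and> (\<forall>x\<in>H. \<chi> x = \<psi> x ^ r))"

end

theory Submission
  imports Defs "HOL-Library.Real_Mod"
begin

text \<open>Let \<open>a\<close> be an integer vector with \<open>\<Sum>\<^sub>j r\<^sup>i\<^sub>j a\<^sub>j = 0\<close> for all \<open>i\<close>. The character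
  \<open>\<Prod>\<^sub>j \<chi>\<^sub>j\<^bsup>a\<^sub>j\<^esup>\<close> restricts on each \<open>H\<^sub>i\<close> to \<open>\<psi>\<^sub>i\<^bsup>\<Sum>\<^sub>j r\<^sup>i\<^sub>j a\<^sub>j\<^esup> = 1\<close>, so it is trivial, as the
  \<open>H\<^sub>i\<close> generate \<open>G\<close>; evaluating it at \<open>e\<^sub>j\<close> gives \<open>ord e\<^sub>j | a\<^sub>j\<close>. Hence every integer kernel
  vector is divisible by \<open>d = ord e\<^sub>1 \<ge> 2\<close>, and dividing by \<open>d\<close> gives another one, so it is
  divisible by all powers of \<open>d\<close> and vanishes. Clearing denominators, the kernel over \<open>\<rat>\<close> is
  trivial too.\<close>

lemma exp_two_pi_i_powi_eq_1_iff:
  assumes "m \<noteq> 0"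
  shows "exp (2 * pi * \<i> / of_nat m) powi a = 1 \<longleftrightarrow> int m dvd a"
proof -
  have "exp (2 * pi * \<i> / of_nat m) powi a = cis (2 * pi * of_int a / of_nat m)"
    by (simp add: exp_power_int cis_conv_exp field_simps)
  also have "\<dots> = 1 \<longleftrightarrow> (\<exists>n::int. 2 * pi * of_int a / of_nat m = of_int n * (2 * pi))"
    by (rule cis_eq_1_iff)
  also have "\<dots> \<longleftrightarrow> (\<exists>n::int. of_int a = (of_int (n * int m) :: real))"
    using assms by (simp add: field_simps)
  also have "\<dots> \<longleftrightarrow> int m dvd a"
    by (auto simp only: of_int_eq_iff dvd_def mult.commute)
  finally show ?thesis .
qed

lemma power_int_sum:
  fixes x :: "'a::field"
  assumes "x \<noteq> 0"
  shows "x powi (\<Sum>i\<in>A. f i) = (\<Prod>i\<in>A. x powi f i)"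
  by (induction A rule: infinite_finite_induct) (simp_all add: power_int_add assms)

lemma char_on_subset: "char_on G S \<phi> \<Longrightarrow> T \<subseteq> S \<Longrightarrow> char_on G T \<phi>"
  unfolding char_on_def by blast

lemma char_on_one:
  assumes "monoid G" "char_on G S \<phi>" "\<one>\<^bsub>G\<^esub> \<in> S"
  shows "\<phi> \<one>\<^bsub>G\<^esub> = 1"
proof -
  have "\<phi> \<one>\<^bsub>G\<^esub> = \<phi> \<one>\<^bsub>G\<^esub> * \<phi> \<one>\<^bsub>G\<^esub>"
    using assms monoid.l_one[OF assms(1) monoid.one_closed[OF assms(1)]]
    unfolding char_on_def by metis
  moreover have "\<phi> \<one>\<^bsub>G\<^esub> \<noteq> 0"
    using assms(2,3) unfolding char_on_def by blast
  ultimately show ?thesis by simp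
qed

lemma char_on_prod_powi:
  assumes "finite L" "\<forall>l\<in>L. char_on G S (\<chi> l)"
  shows "char_on G S (\<lambda>x. \<Prod>l\<in>L. \<chi> l x powi a l)"
  using assms unfolding char_on_def
  by (auto simp: prod_zero_iff prod.distrib power_int_mult_distrib power_int_eq_0_iff intro!: prod.cong)

lemma (in group) char_on_nat_pow:
  assumes "subgroup S G" "char_on G S \<phi>" "x \<in> S"
  shows "\<phi> (x [^] (n::nat)) = \<phi> x ^ n"
proof (induction n)
  case 0
  show ?case using char_on_one[OF is_monoid assms(2) subgroup.one_closed[OF assms(1)]] by simp
next
  case (Suc n)
  have "x [^] n \<in> S"
    using subgroup_int_pow_closed[OF assms(1,3), of "int n"] by (simp add: int_pow_int)
  then show ?case
    using Suc assms(2,3) subgroup.subset[OF assms(1)] unfolding char_on_def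
    by (auto simp: mult.commute)
qed

lemma (in comm_group) char_on_finprod:
  assumes "char_on G (carrier G) \<phi>" "h \<in> I \<rightarrow> carrier G"
  shows "\<phi> (finprod G h I) = (\<Prod>i\<in>I. \<phi> (h i))"
  using assms(2)
proof (induction I rule: infinite_finite_induct)
  case (infinite I)
  then show ?case using char_on_one[OF is_monoid assms(1)] by simp
next
  case empty
  then show ?case using char_on_one[OF is_monoid assms(1)] by simp
next
  case (insert i I)
  then show ?case using assms(1) unfolding char_on_def by (simp add: finprod_closed)
qed

lemma (in comm_group) char_on_eq_1_if_eq_1_on_summands:
  assumes "char_on G (carrier G) \<phi>"
    and "\<forall>g\<in>carrier G. \<exists>h. (\<forall>i<k. h i \<in> H i) \<and> g = finprod G h {..<k}"
    and "\<forall>i<k. H i \<subseteq> carrier G" and "\<forall>i<k. \<forall>x\<in>H i. \<phi> x = 1"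
    and "g \<in> carrier G"
  shows "\<phi> g = 1"
proof -
  obtain h where h: "\<forall>i<k. h i \<in> H i" and g: "g = finprod G h {..<k}"
    using assms(2,5) by blast
  have "h \<in> {..<k} \<rightarrow> carrier G" using h assms(3) by blast
  then have "\<phi> g = (\<Prod>i<k. \<phi> (h i))" unfolding g by (rule char_on_finprod[OF assms(1)])
  also have "\<dots> = 1" using h assms(4) by simp
  finally show ?thesis .
qed

lemma (in group) exists_char_on_generate:
  assumes "finite (carrier G)" "g \<in> carrier G"
  obtains \<phi> where "char_on G (generate G {g}) \<phi>" "\<phi> g = exp (2 * pi * \<i> / of_nat (ord g))"
proof -
  define \<omega> :: complex where "\<omega> = exp (2 * pi * \<i> / of_nat (ord g))"
  \<comment> \<open>\<open>g\<^sup>n \<mapsto> \<omega>\<^sup>n\<close>, well defined because \<open>\<omega>\<close> has order exactly \<open>ord g\<close>\<close>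
  define \<phi> where "\<phi> x = \<omega> powi (SOME n::int. x = g [^] n)" for x
  have ord: "ord g \<noteq> 0" using ord_ge_1[OF assms] by simp
  have \<omega>: "\<omega> \<noteq> 0" by (simp add: \<omega>_def)
  have \<phi>_pow: "\<phi> (g [^] n) = \<omega> powi n" for n :: int
  proof -
    define n' where "n' = (SOME n'::int. g [^] n = g [^] n')"
    have "g [^] n = g [^] n'" unfolding n'_def by (rule someI) (rule refl)
    then have "\<omega> powi (n' - n) = 1"
      using int_pow_eq[OF assms(2)] exp_two_pi_i_powi_eq_1_iff[OF ord] by (simp add: \<omega>_def)
    moreover have "\<omega> powi n' = \<omega> powi n * \<omega> powi (n' - n)"
      using \<omega> by (simp flip: power_int_add)
    ultimately have "\<omega> powi n' = \<omega> powi n" by simp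
    then show ?thesis unfolding \<phi>_def n'_def by simp
  qed
  have "generate G {g} = range (\<lambda>n::int. g [^] n)"
    using generate_pow[OF assms(2)] by auto
  then have "char_on G (generate G {g}) \<phi>"
    unfolding char_on_def using \<omega>
    by (auto simp: \<phi>_pow power_int_add simp flip: int_pow_mult[OF assms(2)])
  moreover have "\<phi> g = \<omega>" using \<phi>_pow[of 1] assms(2) by simp
  ultimately show thesis using that unfolding \<omega>_def by blast
qed

lemma (in group) generates_dual_generate_power_eq_1_iff:
  assumes "finite (carrier G)" "g \<in> carrier G" "generates_dual G (generate G {g}) \<psi>"
  shows "\<psi> g ^ d = 1 \<longleftrightarrow> ord g dvd d"
proof -
  have sub: "subgroup (generate G {g}) G" using generate_is_subgroup assms(2) by auto
  have \<psi>: "char_on G (generate G {g}) \<psi>" using assms(3) unfolding generates_dual_def by blast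
  have g: "g \<in> generate G {g}" by (simp add: generate.incl)
  show ?thesis
  proof
    assume "ord g dvd d"
    then have "g [^] d = \<one>" using pow_eq_id[OF assms(2)] by simp
    then show "\<psi> g ^ d = 1"
      using char_on_nat_pow[OF sub \<psi> g, of d] char_on_one[OF is_monoid \<psi>] subgroup.one_closed[OF sub]
      by simp
  next
    assume \<psi>d: "\<psi> g ^ d = 1"
    \<comment> \<open>a faithful character is a power of \<open>\<psi>\<close>, so \<open>\<psi> g\<close> is a primitive root of unity\<close>
    obtain \<phi> where \<phi>: "char_on G (generate G {g}) \<phi>" "\<phi> g = exp (2 * pi * \<i> / of_nat (ord g))"
      using exists_char_on_generate[OF assms(1,2)] .
    obtain n where "\<forall>x\<in>generate G {g}. \<phi> x = \<psi> x ^ n"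
      using assms(3) \<phi>(1) unfolding generates_dual_def by blast
    then have "exp (2 * pi * \<i> / of_nat (ord g)) = \<psi> g ^ n"
      using g \<phi>(2) by simp
    then have "exp (2 * pi * \<i> / of_nat (ord g)) ^ d = (\<psi> g ^ d) ^ n"
      by (metis power_mult mult.commute)
    then have "exp (2 * pi * \<i> / of_nat (ord g)) powi int d = 1" using \<psi>d by simp
    then show "ord g dvd d"
      using exp_two_pi_i_powi_eq_1_iff[of "ord g" "int d"] ord_ge_1[OF assms(1,2)] by simp
  qed
qed

lemma (in group) in_IG_obtain_generator:
  assumes "finite (carrier G)" "in_IG G H \<psi>"
  obtains g where "g \<in> carrier G" "H = generate G {g}" "\<And>d. \<psi> g ^ d = 1 \<longleftrightarrow> card H dvd d"
proof -
  have sub: "subgroup H G" and cyc: "cyclic_group (subgroup_generated G H)"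
    and gd: "generates_dual G H \<psi>"
    using assms(2) unfolding in_IG_def by auto
  have carr: "carrier (subgroup_generated G H) = H"
    using sub by (rule subgroup.carrier_subgroup_generated_subgroup)
  obtain g where gH: "g \<in> H" and H: "H = range (\<lambda>n::int. g [^]\<^bsub>subgroup_generated G H\<^esub> n)"
    using group.cyclic_group[OF group_subgroup_generated] cyc carr by auto
  have g: "g \<in> carrier G" using gH subgroup.subset[OF sub] by blast
  have H_gen: "H = generate G {g}"
    using H generate_pow[OF g] int_pow_subgroup_generated[of g H] gH carr by auto
  have "card H = ord g" using generate_pow_card[OF g] H_gen by simp
  then show thesis
    using that g H_gen generates_dual_generate_power_eq_1_iff[OF assms(1) g] gd by simp
qed

lemma (in group) in_IG_power_card_eq_1:
  assumes "finite (carrier G)" "in_IG G H \<psi>" "x \<in> H"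
  shows "\<psi> x ^ card H = 1"
proof -
  obtain g where g: "g \<in> carrier G" "H = generate G {g}" "\<And>d. \<psi> g ^ d = 1 \<longleftrightarrow> card H dvd d"
    using in_IG_obtain_generator[OF assms(1,2)] by metis
  obtain t :: nat where x: "x = g [^] t"
    using assms(3) generate_pow_on_finite_carrier[OF assms(1) g(1)] g(2) by auto
  have "\<psi> x = \<psi> g ^ t"
    using assms(2) g(2) unfolding x in_IG_def generates_dual_def
    by (auto intro: char_on_nat_pow generate.incl)
  then have "\<psi> x ^ card H = (\<psi> g ^ card H) ^ t"
    by (metis power_mult mult.commute)
  then show ?thesis using g(3)[of "card H"] by simp
qed

lemma (in group) in_IG_power_inj:
  assumes "finite (carrier G)" "in_IG G H \<psi>" "r < card H" "r' < card H"
    and "\<forall>x\<in>H. \<psi> x ^ r = \<psi> x ^ r'"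
  shows "r = r'"
proof -
  obtain g where g: "g \<in> H" "\<And>d. \<psi> g ^ d = 1 \<longleftrightarrow> card H dvd d"
    using in_IG_obtain_generator[OF assms(1,2)] generate.incl by (metis singletonI)
  have "\<psi> g \<noteq> 0" using assms(2) g(1) unfolding in_IG_def generates_dual_def char_on_def by blast
  then have dvd_diff: "card H dvd u' - u" if "\<psi> g ^ u = \<psi> g ^ u'" for u u'
  proof (cases "u \<le> u'")
    case True
    then have "\<psi> g ^ (u' - u) = 1" using power_diff[OF \<open>\<psi> g \<noteq> 0\<close> True] that \<open>\<psi> g \<noteq> 0\<close> by simp
    then show ?thesis using g(2) by simp
  qed simp
  have "card H dvd r' - r" "card H dvd r - r'"
    using dvd_diff assms(5) g(1) by auto
  moreover have "r' - r < card H" "r - r' < card H"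
    using assms(3,4) by auto
  ultimately show ?thesis
    by (metis dvd_imp_le not_le neq0_conv diff_is_0_eq le_antisym)
qed

lemma (in group) r_coef_power:
  assumes "finite (carrier G)" "in_IG G H \<psi>" "char_on G H \<chi>" "x \<in> H"
  shows "\<chi> x = \<psi> x ^ r_coef H \<psi> \<chi>"
proof -
  obtain n where n: "\<forall>y\<in>H. \<chi> y = \<psi> y ^ n"
    using assms(2,3) unfolding in_IG_def generates_dual_def by blast
  have "card H > 0" using assms(2) unfolding in_IG_def by auto
  have mod: "\<psi> y ^ n = \<psi> y ^ (n mod card H)" if "y \<in> H" for y
  proof -
    have "\<psi> y ^ n = \<psi> y ^ (card H * (n div card H) + n mod card H)"
      by simp
    also have "\<dots> = (\<psi> y ^ card H) ^ (n div card H) * \<psi> y ^ (n mod card H)"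
      by (simp only: power_add power_mult)
    finally show ?thesis using in_IG_power_card_eq_1[OF assms(1,2) that] by simp
  qed
  have "r_coef H \<psi> \<chi> = n mod card H"
    unfolding r_coef_def
  proof (rule the_equality)
    show "n mod card H < card H \<and> (\<forall>y\<in>H. \<chi> y = \<psi> y ^ (n mod card H))"
      using \<open>card H > 0\<close> n mod by simp
  next
    fix r assume "r < card H \<and> (\<forall>y\<in>H. \<chi> y = \<psi> y ^ r)"
    then show "r = n mod card H"
      using in_IG_power_inj[OF assms(1,2)] \<open>card H > 0\<close> n mod by simp
  qed
  then show ?thesis using n mod assms(4) by simp
qed

lemma (in group) is_basis_orders_common_divisor:
  assumes "finite (carrier G)" "is_basis G s e"
  obtains d where "2 \<le> d" "\<And>j. j < s \<Longrightarrow> d dvd ord (e j)"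
proof (cases "s = 0")
  case True
  then show ?thesis using that[of 2] by simp
next
  case False
  have e0: "e 0 \<in> carrier G" "e 0 \<noteq> \<one>"
    using assms(2) False unfolding is_basis_def by auto
  have "2 \<le> ord (e 0)"
    using ord_ge_1[OF assms(1) e0(1)] ord_eq_1[OF e0(1)] e0(2) by linarith
  moreover have "ord (e 0) dvd ord (e j)" if "j < s" for j
    using that
  proof (induction j)
    case (Suc j)
    then show ?case using assms(2) unfolding is_basis_def by (metis Suc_lessD dvd_trans)
  qed simp
  ultimately show ?thesis using that by blast
qed

lemma (in comm_group) dual_basis_ord_dvd_kernel_entry:
  assumes "finite (carrier G)" "\<forall>j<s. e j \<in> carrier G" "is_dual_basis G s e \<chi>"
    and gen: "\<forall>g\<in>carrier G. \<exists>h. (\<forall>i<k. h i \<in> H i) \<and> g = finprod G h {..<k}"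
    and sub: "\<forall>i<k. H i \<subseteq> carrier G" and \<psi>: "\<forall>i<k. char_on G (H i) (\<psi> i)"
    and r: "\<forall>i<k. \<forall>j<s. \<forall>x\<in>H i. \<chi> j x = \<psi> i x ^ r i j"
    and kernel: "\<forall>i<k. (\<Sum>l<s. int (r i l) * a l) = 0"
    and "j < s"
  shows "int (ord (e j)) dvd a j"
proof -
  define \<phi> where "\<phi> x = (\<Prod>l<s. \<chi> l x powi a l)" for x
  have \<phi>: "char_on G (carrier G) \<phi>"
    unfolding \<phi>_def using assms(3) unfolding is_dual_basis_def by (intro char_on_prod_powi) auto
  have "\<phi> x = 1" if "i < k" "x \<in> H i" for i x
  proof -
    have "\<psi> i x \<noteq> 0" using \<psi> that unfolding char_on_def by blast
    have "\<phi> x = (\<Prod>l<s. \<psi> i x powi (int (r i l) * a l))"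
      unfolding \<phi>_def using r that by (intro prod.cong) (auto simp: power_int_mult)
    also have "\<dots> = \<psi> i x powi (\<Sum>l<s. int (r i l) * a l)"
      using \<open>\<psi> i x \<noteq> 0\<close> by (simp add: power_int_sum)
    also have "\<dots> = 1" using kernel that by simp
    finally show ?thesis .
  qed
  then have "\<phi> (e j) = 1"
    using char_on_eq_1_if_eq_1_on_summands[OF \<phi> gen sub] assms(2,9) by blast
  have "exp (2 * pi * \<i> / of_nat (ord (e j))) powi a j
      = (\<Prod>l<s. if l = j then exp (2 * pi * \<i> / of_nat (ord (e j))) powi a j else 1)"
    using assms(9) by simp
  also have "\<dots> = \<phi> (e j)"
    unfolding \<phi>_def using assms(3,9) unfolding is_dual_basis_def by (intro prod.cong) auto
  finally show ?thesis
    using \<open>\<phi> (e j) = 1\<close> exp_two_pi_i_powi_eq_1_iff ord_ge_1[OF assms(1)] assms(2,9)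
    by (simp add: Suc_le_eq)
qed

lemma int_eq_0_if_powers_dvd:
  fixes a d :: int
  assumes "2 \<le> d" "\<And>n. d ^ n dvd a"
  shows "a = 0"
proof (rule ccontr)
  assume "a \<noteq> 0"
  have "int (nat \<bar>a\<bar>) < int (2 ^ nat \<bar>a\<bar>)"
    by (simp only: of_nat_less_iff less_exp)
  then have "\<bar>a\<bar> < 2 ^ nat \<bar>a\<bar>" by simp
  also have "\<dots> \<le> d ^ nat \<bar>a\<bar>"
    using assms(1) by (simp add: power_mono)
  also have "\<dots> \<le> \<bar>a\<bar>"
    using dvd_imp_le_int[OF \<open>a \<noteq> 0\<close> assms(2)] assms(1) by simp
  finally show False by simp
qed

lemma int_kernel_eq_0_if_divisible:
  fixes M :: "nat \<Rightarrow> nat \<Rightarrow> int" and d :: int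
  assumes "2 \<le> d"
    and dvd: "\<And>a j. \<forall>i<k. (\<Sum>l<s. M i l * a l) = 0 \<Longrightarrow> j < s \<Longrightarrow> d dvd a j"
    and "\<forall>i<k. (\<Sum>l<s. M i l * a l) = 0" "j < s"
  shows "a j = 0"
proof -
  have "d ^ n dvd a j" if "\<forall>i<k. (\<Sum>l<s. M i l * a l) = 0" for n a
    using that
  proof (induction n arbitrary: a)
    case (Suc n)
    define b where "b l = a l div d" for l
    have a: "a l = d * b l" if "l < s" for l
      using dvd[OF Suc.prems that] unfolding b_def by simp
    have "\<forall>i<k. (\<Sum>l<s. M i l * b l) = 0"
    proof (intro allI impI)
      fix i assume "i < k"
      have "d * (\<Sum>l<s. M i l * b l) = (\<Sum>l<s. M i l * a l)"
        by (simp add: sum_distrib_left a algebra_simps)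
      then show "(\<Sum>l<s. M i l * b l) = 0"
        using Suc.prems \<open>i < k\<close> assms(1) by simp
    qed
    then have "d ^ n dvd b j" by (rule Suc.IH)
    then show ?case using a[OF assms(4)] by simp
  qed simp
  then show ?thesis using int_eq_0_if_powers_dvd[OF assms(1)] assms(3) by blast
qed

lemma rat_common_denominator:
  fixes x :: "nat \<Rightarrow> rat"
  obtains D :: int where "D > 0" "\<And>j. j < s \<Longrightarrow> of_int D * x j \<in> \<int>"
proof -
  define q where "q j = snd (quotient_of (x j))" for j
  have q: "q j > 0" "of_int (q j) * x j \<in> \<int>" for j
  proof -
    obtain p where "quotient_of (x j) = (p, q j)" unfolding q_def by (metis prod.collapse)
    then have "q j > 0" "x j = of_int p / of_int (q j)"
      using quotient_of_denom_pos quotient_of_div by auto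
    then show "q j > 0" "of_int (q j) * x j \<in> \<int>" by simp_all
  qed
  have "of_int (\<Prod>l<s. q l) * x j \<in> \<int>" if "j < s" for j
  proof -
    have "(\<Prod>l<s. q l) = q j * (\<Prod>l\<in>{..<s} - {j}. q l)"
      using that by (simp add: prod.remove)
    then have "of_int (\<Prod>l<s. q l) * x j = (of_int (q j) * x j) * of_int (\<Prod>l\<in>{..<s} - {j}. q l)"
      by (simp only: of_int_mult mult_ac)
    then show ?thesis using q(2)[of j] by (metis Ints_mult Ints_of_int)
  qed
  moreover have "(\<Prod>l<s. q l) > 0" using q(1) by (simp add: prod_pos)
  ultimately show thesis using that by blast
qed

lemma (in vec_space) rank_eq_if_trivial_kernel:
  assumes A: "A \<in> carrier_mat n nc"
    and kernel: "\<And>v. v \<in> carrier_vec nc \<Longrightarrow> A *\<^sub>v v = 0\<^sub>v n \<Longrightarrow> v = 0\<^sub>v nc"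
  shows "rank A = nc"
proof -
  have col: "A *\<^sub>v unit_vec nc j = col A j" if "j < nc" for j
    using A that by (intro eq_vecI) auto
  have "distinct (cols A)"
  proof (rule ccontr)
    assume "\<not> distinct (cols A)"
    then obtain i j where ij: "i < nc" "j < nc" "i \<noteq> j" "col A i = col A j"
      using A by (auto simp: distinct_conv_nth)
    define v :: "'a vec" where "v = unit_vec nc i - unit_vec nc j"
    have "v \<in> carrier_vec nc" by (simp add: v_def)
    moreover have "A *\<^sub>v v = 0\<^sub>v n"
      using A col ij by (simp add: v_def mult_minus_distrib_mat_vec)
    ultimately have "v = 0\<^sub>v nc" by (rule kernel)
    then have "v $ i = 0" using ij(1) by simp
    then show False using ij by (simp add: v_def)
  qed
  moreover have "lin_indpt (set (cols A))"
    using lin_depE[OF A _ \<open>distinct (cols A)\<close>] kernel by blast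
  ultimately show ?thesis by (rule lin_indpt_full_rank[OF A])
qed

lemma rank_eq_if_int_kernel_divisible:
  fixes M :: "nat \<Rightarrow> nat \<Rightarrow> int" and d :: int
  assumes "2 \<le> d"
    and "\<And>a j. \<forall>i<n. (\<Sum>l<nc. M i l * a l) = 0 \<Longrightarrow> j < nc \<Longrightarrow> d dvd a j"
  shows "vec_space.rank n (mat n nc (\<lambda>(i, j). rat_of_int (M i j))) = nc"
proof (rule vec_space.rank_eq_if_trivial_kernel)
  fix v :: "rat vec"
  assume v: "v \<in> carrier_vec nc" and Av: "mat n nc (\<lambda>(i, j). rat_of_int (M i j)) *\<^sub>v v = 0\<^sub>v n"
  obtain D where D: "D > 0" "\<And>j. j < nc \<Longrightarrow> of_int D * v $ j \<in> \<int>"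
    using rat_common_denominator[of nc "\<lambda>j. v $ j"] by blast
  define a where "a j = \<lfloor>of_int D * v $ j\<rfloor>" for j
  have a: "of_int (a j) = of_int D * v $ j" if "j < nc" for j
    unfolding a_def using D(2)[OF that] by (rule of_int_floor)
  have "\<forall>i<n. (\<Sum>l<nc. M i l * a l) = 0"
  proof (intro allI impI)
    fix i assume "i < n"
    have "rat_of_int (\<Sum>l<nc. M i l * a l) = of_int D * (\<Sum>l<nc. of_int (M i l) * v $ l)"
      using a by (simp add: sum_distrib_left ac_simps)
    also have "(\<Sum>l<nc. of_int (M i l) * v $ l) = (mat n nc (\<lambda>(i, j). rat_of_int (M i j)) *\<^sub>v v) $ i"
      using \<open>i < n\<close> v by (simp add: scalar_prod_def lessThan_atLeast0)
    also have "\<dots> = 0" using Av \<open>i < n\<close> by simp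
    finally have "rat_of_int (\<Sum>l<nc. M i l * a l) = 0" by (simp only: mult_zero_right)
    then show "(\<Sum>l<nc. M i l * a l) = 0" by (simp only: of_int_eq_0_iff)
  qed
  then have "a j = 0" if "j < nc" for j
    using int_kernel_eq_0_if_divisible assms that by blast
  then show "v = 0\<^sub>v nc" using a D(1) v by (intro eq_vecI) auto
qed simp

theorem lemma2p1:
  fixes G (structure)
    and s k :: nat
    and e :: "nat \<Rightarrow> 'a"
    and \<chi> :: "nat \<Rightarrow> 'a \<Rightarrow> complex"
    and H :: "nat \<Rightarrow> 'a set"
    and \<psi> :: "nat \<Rightarrow> 'a \<Rightarrow> complex"
  assumes "comm_group G"
    and "finite (carrier G)"
    and "is_basis G s e"
    and "is_dual_basis G s e \<chi>"
    and "\<forall>i<k. in_IG G (H i) (\<psi> i)"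
    and "inj_on (\<lambda>i. (H i, restrict (\<psi> i) (H i))) {..<k}"
    and "\<forall>g\<in>carrier G. \<exists>h. (\<forall>i<k. h i \<in> H i) \<and> g = finprod G h {..<k}"
  shows "vec_space.rank k
           (mat k s (\<lambda>(i, j). rat_of_nat (r_coef (H i) (\<psi> i) (\<chi> j)))) = s"
proof -
  interpret comm_group G by (rule assms(1))
  define r where "r i j = r_coef (H i) (\<psi> i) (\<chi> j)" for i j
  have H: "H i \<subseteq> carrier G" "char_on G (H i) (\<psi> i)" if "i < k" for i
    using assms(5) that unfolding in_IG_def generates_dual_def by (auto dest: subgroup.mem_carrier)
  have "char_on G (carrier G) (\<chi> j)" if "j < s" for j
    using assms(4) that unfolding is_dual_basis_def by blast
  then have r: "\<forall>i<k. \<forall>j<s. \<forall>x\<in>H i. \<chi> j x = \<psi> i x ^ r i j"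
    unfolding r_def using r_coef_power[OF assms(2)] assms(5) H(1) char_on_subset by meson
  obtain d where d: "2 \<le> d" "\<And>j. j < s \<Longrightarrow> d dvd ord (e j)"
    using is_basis_orders_common_divisor[OF assms(2,3)] by blast
  have kernel_dvd: "int d dvd a j" if "\<forall>i<k. (\<Sum>l<s. int (r i l) * a l) = 0" "j < s" for a j
  proof -
    have "\<forall>j<s. e j \<in> carrier G" using assms(3) unfolding is_basis_def by blast
    then have "int (ord (e j)) dvd a j"
      using dual_basis_ord_dvd_kernel_entry[OF assms(2) _ assms(4,7) _ _ r that] H by blast
    then show ?thesis using d(2)[OF that(2)] by (meson dvd_trans int_dvd_int_iff)
  qed
  have "vec_space.rank k (mat k s (\<lambda>(i, j). rat_of_int (int (r i j)))) = s"
    using d(1) kernel_dvd by (intro rank_eq_if_int_kernel_divisible[of "int d"]) auto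
  then show ?thesis by (simp add: r_def)
qed

end
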